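(* Let $f:\mathbb{R}\to(0,\infty)$ be $C^4$, unimodal with maximum at $\mu$, of the form $f=e^{-H}$ with $H$ regularly varying (there is $\alpha>0$ with $H(tx)/H(t)\to x^\alpha$ as $|t|\to\infty$ for all $x>0$), and with $|(\log f)''''|<M$ for some $M>0$. Then for $\beta>0$, $$M'(\beta)=\mathrm{Var}_\beta(h(X)),\qquad S(\beta)=-\frac1\beta,\qquad S'(\beta)=\frac1{\beta^2}.$$
   Context: $h=\log f$, $k(x)=(x-\mu)h'(x)$; $\mathbb{E}_\beta,\mathrm{Var}_\beta$ denote moments under the density $f^\beta(x)/Z_\beta$ with $Z_\beta=\int f^\beta(z)\,dz$; $M(\beta)=\mathbb{E}_\beta[h(X)]$ and $S(\beta)=\mathbb{E}_\beta[k(X)]$. *)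

theory Defs
  imports "HOL-Analysis.Analysis"
begin

definition C4 :: "(real \<Rightarrow> real) \<Rightarrow> bool" where
  "C4 f \<longleftrightarrow> (\<forall>k<4. \<forall>x. ((deriv ^^ k) f has_real_derivative (deriv ^^ Suc k) f x) (at x))
              \<and> continuous_on UNIV ((deriv ^^ 4) f)"

definition logf :: "(real \<Rightarrow> real) \<Rightarrow> real \<Rightarrow> real" where
  "logf f = (\<lambda>x. ln (f x))"

definition Zb :: "(real \<Rightarrow> real) \<Rightarrow> real \<Rightarrow> real" where
  "Zb f \<beta> = (\<integral>x. f x powr \<beta> \<partial>lborel)"

definition Eb :: "(real \<Rightarrow> real) \<Rightarrow> real \<Rightarrow> (real \<Rightarrow> real) \<Rightarrow> real" where
  "Eb f \<beta> g = (\<integral>x. g x * f x powr \<beta> \<partial>lborel) / Zb f \<beta>"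

definition Varb :: "(real \<Rightarrow> real) \<Rightarrow> real \<Rightarrow> (real \<Rightarrow> real) \<Rightarrow> real" where
  "Varb f \<beta> g = Eb f \<beta> (\<lambda>x. (g x - Eb f \<beta> g)\<^sup>2)"

definition Mfun :: "(real \<Rightarrow> real) \<Rightarrow> real \<Rightarrow> real" where
  "Mfun f \<beta> = Eb f \<beta> (logf f)"

definition kfun :: "(real \<Rightarrow> real) \<Rightarrow> real \<Rightarrow> real \<Rightarrow> real" where
  "kfun f \<mu> x = (x - \<mu>) * deriv (logf f) x"

definition Sfun :: "(real \<Rightarrow> real) \<Rightarrow> real \<Rightarrow> real \<Rightarrow> real" where
  "Sfun f \<mu> \<beta> = Eb f \<beta> (kfun f \<mu>)"

end

theory Submission
  imports Defs "HOL-Probability.Sinc_Integral" "HOL-Real_Asymp.Real_Asymp"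
begin

(* Write h = log f. Since -h is monotone on either side of the mode and -h(2t)/(-h(t)) tends to
   2 powr \<alpha> > 1, iterating -h(2t) \<ge> q (-h(t)) for some 1 < q < 2 powr \<alpha> gives the bound
   -h x \<ge> a \<bar>x\<bar> powr \<gamma> for large \<bar>x\<bar>. Hence every f powr s = exp (s h) is O(1 / (1 + x^2)),
   and h exp (b h), h^2 exp (b h) are dominated uniformly for b near \<beta>, so Z(b) = \<integral> exp (b h)
   and \<integral> h exp (b h) may be differentiated under the integral sign; the quotient rule then
   gives M' = Var.
   For S, the function (x - \<mu>) exp (\<beta> h x) has derivative exp (\<beta> h) + \<beta> k exp (\<beta> h) and
   vanishes at infinity, so \<integral> k f powr \<beta> = - Z(\<beta>) / \<beta>; unimodality gives k \<le> 0, which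
   lets monotone convergence pass from [-n, n] to the whole line. S = -1/b for all b > 0 then
   gives S' = 1/\<beta>^2. *)

lemma has_real_derivative_integral_dominated:
  fixes F F' :: "real \<Rightarrow> 'a \<Rightarrow> real" and g :: "'a \<Rightarrow> real"
  assumes b0: "b0 \<in> {a<..<c}"
    and int: "\<And>b. b \<in> {a<..<c} \<Longrightarrow> integrable M (F b)"
    and der: "\<And>b x. b \<in> {a<..<c} \<Longrightarrow> ((\<lambda>b. F b x) has_real_derivative F' b x) (at b)"
    and g: "integrable M g"
    and bound: "\<And>b x. b \<in> {a<..<c} \<Longrightarrow> \<bar>F' b x\<bar> \<le> g x"
    and meas: "F' b0 \<in> borel_measurable M"
  shows "((\<lambda>b. \<integral>x. F b x \<partial>M) has_real_derivative (\<integral>x. F' b0 x \<partial>M)) (at b0)"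
proof -
  let ?I = "{a<..<c}"
  let ?Q = "\<lambda>b. ((\<integral>x. F b x \<partial>M) - (\<integral>x. F b0 x \<partial>M)) / (b - b0)"
  have lipschitz: "\<bar>F b x - F b0 x\<bar> \<le> g x * \<bar>b - b0\<bar>" if "b \<in> ?I" for b x
  proof -
    have "norm (F b x - F b0 x) \<le> g x * norm (b - b0)"
      by (rule field_differentiable_bound[where S = ?I and f = "\<lambda>b. F b x"])
        (use that b0 bound der in \<open>auto intro: has_field_derivative_at_within\<close>)
    then show ?thesis by simp
  qed
  have "(?Q \<longlongrightarrow> (\<integral>x. F' b0 x \<partial>M)) (at b0 within ?I)"
    unfolding tendsto_at_iff_sequentially
  proof (intro allI impI)
    fix X :: "nat \<Rightarrow> real"
    assume X: "\<forall>i. X i \<in> ?I - {b0}" and X_lim: "X \<longlonglongrightarrow> b0"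
    define s where "s i x = (F (X i) x - F b0 x) / (X i - b0)" for i x
    have "(\<lambda>i. integral\<^sup>L M (s i)) \<longlonglongrightarrow> integral\<^sup>L M (F' b0)"
    proof (rule integral_dominated_convergence[where w = g])
      show "s i \<in> borel_measurable M" for i
        unfolding s_def using int X b0 by (auto intro!: borel_measurable_divide borel_measurable_diff)
      show "AE x in M. (\<lambda>i. s i x) \<longlonglongrightarrow> F' b0 x"
      proof (rule AE_I2)
        fix x
        have "((\<lambda>b. (F b x - F b0 x) / (b - b0)) \<longlongrightarrow> F' b0 x) (at b0 within ?I)"
          using der[OF b0, of x] by (auto simp: has_field_derivative_iff intro: tendsto_within_subset)
        then show "(\<lambda>i. s i x) \<longlonglongrightarrow> F' b0 x"
          unfolding tendsto_at_iff_sequentially s_def comp_def using X X_lim by auto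
      qed
      show "AE x in M. norm (s i x) \<le> g x" for i
        using lipschitz[of "X i"] X by (intro AE_I2) (auto simp: s_def abs_divide divide_le_eq)
    qed (use g meas in auto)
    moreover have "integral\<^sup>L M (s i) = ?Q (X i)" for i
      unfolding s_def using int X b0 by simp
    ultimately show "(?Q \<circ> X) \<longlonglongrightarrow> (\<integral>x. F' b0 x \<partial>M)"
      by (simp add: comp_def)
  qed
  then show ?thesis
    using at_within_open[OF b0] by (simp add: has_field_derivative_iff)
qed

lemma integral_lborel_pos:
  fixes g :: "real \<Rightarrow> real"
  assumes "integrable lborel g" "\<And>x. g x > 0"
  shows "(\<integral>x. g x \<partial>lborel) > 0"
proof -
  have "(\<integral>x. g x \<partial>lborel) \<noteq> 0"
  proof
    assume "(\<integral>x. g x \<partial>lborel) = 0"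
    then have "AE x in lborel. g x = 0"
      using integral_nonneg_eq_0_iff_AE[OF assms(1)] assms(2) by (simp add: less_imp_le)
    then have "AE x::real in lborel. False"
      using assms(2) by (simp add: less_le)
    then show False
      by (simp add: ae_filter_eq_bot_iff emeasure_lborel_UNIV eventually_False)
  qed
  moreover have "(\<integral>x. g x \<partial>lborel) \<ge> 0"
    using assms(2) by (simp add: less_imp_le)
  ultimately show ?thesis by simp
qed

lemma integrable_if_le_inverse_one_plus_square:
  fixes g :: "real \<Rightarrow> real"
  assumes "g \<in> borel_measurable lborel" "\<And>x. \<bar>g x\<bar> \<le> C / (1 + x\<^sup>2)"
  shows "integrable lborel g"
proof (rule Bochner_Integration.integrable_bound)
  have "integrable lborel (\<lambda>x::real. inverse (1 + x\<^sup>2))"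
    using integrable_inverse_1_plus_square by (simp add: set_integrable_def einterval_def)
  then show "integrable lborel (\<lambda>x. C * inverse (1 + x\<^sup>2))" by simp
  show "AE x in lborel. norm (g x) \<le> norm (C * inverse (1 + x\<^sup>2))"
    using assms(2) by (intro AE_I2) (auto simp: divide_inverse intro: order_trans[OF _ abs_ge_self])
qed (rule assms(1))

lemma tendsto_mult_indicator_Icc_nat:
  fixes g :: "real \<Rightarrow> real"
  shows "(\<lambda>n. g x * indicator {- real n..real n} x) \<longlonglongrightarrow> g x"
proof (rule tendsto_eventually)
  show "\<forall>\<^sub>F n in sequentially. g x * indicator {- real n..real n} x = g x"
    by (rule eventually_sequentiallyI[of "nat \<lceil>\<bar>x\<bar>\<rceil>"])
      (auto split: split_indicator simp: nat_le_iff ceiling_le_iff abs_le_iff)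
qed

lemma tendsto_integral_mult_indicator_Icc_nat:
  fixes g :: "real \<Rightarrow> real"
  assumes "integrable lborel g"
  shows "(\<lambda>n. \<integral>x. g x * indicator {- real n..real n} x \<partial>lborel) \<longlonglongrightarrow> (\<integral>x. g x \<partial>lborel)"
proof (rule integral_dominated_convergence[where w = "\<lambda>x. \<bar>g x\<bar>"])
  show "AE x in lborel. norm (g x * indicator {- real n..real n} x) \<le> \<bar>g x\<bar>" for n
    by (intro AE_I2) (simp split: split_indicator)
qed (use assms tendsto_mult_indicator_Icc_nat in auto)

lemma tendsto_linear_mult_pm_real_nat:
  fixes \<phi> :: "real \<Rightarrow> real"
  assumes "\<And>x. \<bar>\<phi> x\<bar> \<le> C / (1 + x\<^sup>2)"
  shows "(\<lambda>n. (real n - \<mu>) * \<phi> (real n)) \<longlonglongrightarrow> 0"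
    and "(\<lambda>n. (- real n - \<mu>) * \<phi> (- real n)) \<longlonglongrightarrow> 0"
proof -
  have "((\<lambda>x. (x - \<mu>) * \<phi> x) \<longlongrightarrow> 0) at_infinity"
  proof (rule Lim_null_comparison)
    have "norm ((x - \<mu>) * \<phi> x) \<le> C * \<bar>x - \<mu>\<bar> / (1 + x\<^sup>2)" for x
    proof -
      have "\<bar>\<phi> x\<bar> * \<bar>x - \<mu>\<bar> \<le> C / (1 + x\<^sup>2) * \<bar>x - \<mu>\<bar>"
        using assms by (rule mult_right_mono) simp
      then show ?thesis by (simp add: abs_mult mult.commute)
    qed
    then show "\<forall>\<^sub>F x in at_infinity. norm ((x - \<mu>) * \<phi> x) \<le> C * \<bar>x - \<mu>\<bar> / (1 + x\<^sup>2)"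
      by simp
    show "((\<lambda>x. C * \<bar>x - \<mu>\<bar> / (1 + x\<^sup>2)) \<longlongrightarrow> 0) at_infinity"
      unfolding at_infinity_eq_at_top_bot by (intro filterlim_sup; real_asymp)
  qed
  moreover have "filterlim real at_infinity sequentially"
    using filterlim_real_sequentially at_top_le_at_infinity by (rule filterlim_mono) simp
  moreover have "filterlim (\<lambda>n. - real n) at_infinity sequentially"
    using filterlim_compose[OF filterlim_uminus_at_bot_at_top filterlim_real_sequentially]
      at_bot_le_at_infinity by (rule filterlim_mono) simp
  ultimately show "(\<lambda>n. (real n - \<mu>) * \<phi> (real n)) \<longlonglongrightarrow> 0"
    "(\<lambda>n. (- real n - \<mu>) * \<phi> (- real n)) \<longlonglongrightarrow> 0"
    by (auto intro: filterlim_compose)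
qed

lemma doubling_iterate_lower_bound:
  fixes G :: "real \<Rightarrow> real"
  assumes "T \<ge> 0" "q \<ge> 0" and mono: "mono_on {T..} G"
    and doubling: "\<And>t. t \<ge> T \<Longrightarrow> q * G t \<le> G (2 * t)"
  shows "T * 2 ^ n \<le> t \<Longrightarrow> q ^ n * G T \<le> G t"
proof (induction n arbitrary: t)
  case 0
  then show ?case using mono by (auto intro: mono_onD)
next
  case (Suc n)
  have half: "T * 2 ^ n \<le> t / 2" using Suc.prems by simp
  moreover have "T \<le> T * 2 ^ n" using mult_left_mono[of 1 "2 ^ n" T] \<open>T \<ge> 0\<close> by simp
  ultimately have "T \<le> t / 2" by linarith
  have "q ^ Suc n * G T = q * (q ^ n * G T)" by simp
  also have "\<dots> \<le> q * G (t / 2)" using Suc.IH[OF half] \<open>q \<ge> 0\<close> by (rule mult_left_mono)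
  also have "\<dots> \<le> G t" using doubling[OF \<open>T \<le> t / 2\<close>] by simp
  finally show ?case .
qed

lemma powr_lower_bound_if_doubling:
  fixes G :: "real \<Rightarrow> real"
  assumes "T > 0" "q > 1" "G T > 0" and mono: "mono_on {T..} G"
    and doubling: "\<And>t. t \<ge> T \<Longrightarrow> q * G t \<le> G (2 * t)" and "t \<ge> T"
  shows "G T / (q * T powr log 2 q) * t powr log 2 q \<le> G t"
proof -
  define \<gamma> where "\<gamma> = log 2 q"
  have \<gamma>: "\<gamma> > 0" "2 powr \<gamma> = q" using \<open>q > 1\<close> by (simp_all add: \<gamma>_def)
  define n where "n = nat \<lfloor>log 2 (t / T)\<rfloor>"
  have "log 2 (t / T) \<ge> 0" using assms by simp
  then have n: "real n \<le> log 2 (t / T)" "log 2 (t / T) < real n + 1"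
    by (simp_all add: n_def)
  have "2 powr real n \<le> t / T" using n(1) assms by (simp add: le_log_iff)
  then have "T * 2 ^ n \<le> t" using \<open>T > 0\<close> by (simp add: powr_realpow field_simps)
  then have lower: "q ^ n * G T \<le> G t"
    using doubling_iterate_lower_bound[OF _ _ mono doubling] assms by simp
  have "t / T < 2 powr (real n + 1)" using n(2) assms by (simp add: log_less_iff)
  then have "(t / T) powr \<gamma> \<le> (2 powr (real n + 1)) powr \<gamma>"
    using \<gamma> assms by (intro powr_mono2) auto
  also have "\<dots> = (2 powr \<gamma>) powr (real n + 1)" by (simp add: powr_powr mult.commute)
  also have "\<dots> = q ^ (n + 1)" using \<open>q > 1\<close> powr_realpow[of q "Suc n"] by (simp add: \<gamma>(2) add.commute)
  finally have "t powr \<gamma> \<le> T powr \<gamma> * q ^ (n + 1)"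
    using assms by (simp add: powr_divide divide_le_eq mult.commute)
  then have "G T / (q * T powr \<gamma>) * t powr \<gamma> \<le> G T / (q * T powr \<gamma>) * (T powr \<gamma> * q ^ (n + 1))"
    using assms by (intro mult_left_mono) auto
  also have "\<dots> = q ^ n * G T" using assms by (simp add: field_simps)
  finally show ?thesis using lower unfolding \<gamma>_def by linarith
qed

lemma powr_lower_bound_if_doubling_ratio_tendsto:
  fixes G :: "real \<Rightarrow> real"
  assumes mono: "mono_on {c..} G" and lim: "((\<lambda>t. G (2 * t) / G t) \<longlongrightarrow> L) at_top" and "L > 1"
  obtains a \<gamma> T where "a > 0" "\<gamma> > 0" "\<And>t. t \<ge> T \<Longrightarrow> a * t powr \<gamma> \<le> G t"
proof -
  define q where "q = (1 + L) / 2"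
  have q: "1 < q" "q < L" using \<open>L > 1\<close> by (auto simp: q_def)
  obtain T0 where T0: "\<And>t. t \<ge> T0 \<Longrightarrow> G (2 * t) / G t > q"
    using order_tendstoD(1)[OF lim \<open>q < L\<close>] by (auto simp: eventually_at_top_linorder)
  define T where "T = max T0 (max c 1)"
  have T: "T \<ge> 1" "T \<ge> c" "T \<ge> T0" by (auto simp: T_def)
  have monoT: "mono_on {T..} G" using mono T(2) by (auto intro: mono_on_subset)
  have doubling: "0 < G t \<and> q * G t \<le> G (2 * t)" if "t \<ge> T" for t
  proof -
    have ratio: "G (2 * t) / G t > q" using T0 T that by auto
    have "G t \<le> G (2 * t)" using mono T that by (auto intro: mono_onD)
    have "G t > 0"
    proof (rule ccontr)
      assume "\<not> G t > 0"
      moreover have "G t \<noteq> 0" using ratio q by auto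
      ultimately have "G t < 0" by simp
      then have "G (2 * t) < q * G t" using ratio by (simp add: less_divide_eq)
      also have "\<dots> < G t" using \<open>G t < 0\<close> q by (simp add: mult_less_cancel_right2)
      finally show False using \<open>G t \<le> G (2 * t)\<close> by simp
    qed
    then show ?thesis using ratio by (simp add: less_divide_eq)
  qed
  have "G T > 0" using doubling[of T] by simp
  show ?thesis
  proof (rule that)
    show "G T / (q * T powr log 2 q) > 0" "log 2 q > 0" using \<open>G T > 0\<close> q T by simp_all
    show "G T / (q * T powr log 2 q) * t powr log 2 q \<le> G t" if "t \<ge> T" for t
      using powr_lower_bound_if_doubling[OF _ _ \<open>G T > 0\<close> monoT _ that] q T doubling by simp
  qed
qed

lemma exp_le_inverse_one_plus_square_if_powr_tail:
  fixes h :: "real \<Rightarrow> real"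
  assumes hmax: "\<And>x. h x \<le> m" and "a > 0" "\<gamma> > 0" "s > 0"
    and tail: "\<And>x. T \<le> \<bar>x\<bar> \<Longrightarrow> a * \<bar>x\<bar> powr \<gamma> \<le> - h x"
  obtains C where "\<And>x. exp (s * h x) \<le> C / (1 + x\<^sup>2)"
proof -
  have "((\<lambda>t. (1 + t\<^sup>2) * exp (- (s * a) * t powr \<gamma>)) \<longlongrightarrow> 0) at_top"
    using assms by real_asymp
  then have "\<forall>\<^sub>F t in at_top. (1 + t\<^sup>2) * exp (- (s * a) * t powr \<gamma>) < 1"
    by (rule order_tendstoD) simp
  then obtain R where R: "\<And>t. t \<ge> R \<Longrightarrow> (1 + t\<^sup>2) * exp (- (s * a) * t powr \<gamma>) < 1"
    unfolding eventually_at_top_linorder by blast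
  define R' where "R' = max R T"
  have "exp (s * h x) \<le> (1 + exp (s * m) * (1 + R'\<^sup>2)) / (1 + x\<^sup>2)" for x
  proof (cases "\<bar>x\<bar> \<ge> R'")
    case True
    then have "a * \<bar>x\<bar> powr \<gamma> \<le> - h x" by (intro tail) (simp add: R'_def)
    then have "s * h x \<le> - (s * a) * \<bar>x\<bar> powr \<gamma>"
      using mult_left_mono[of _ _ s] \<open>s > 0\<close> by (fastforce simp: mult.assoc)
    then have "exp (s * h x) * (1 + x\<^sup>2) \<le> exp (- (s * a) * \<bar>x\<bar> powr \<gamma>) * (1 + \<bar>x\<bar>\<^sup>2)"
      by (intro mult_mono) auto
    also have "\<dots> < 1" using R[of "\<bar>x\<bar>"] True by (simp add: R'_def mult.commute)
    finally have "exp (s * h x) \<le> 1 / (1 + x\<^sup>2)"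
      by (simp add: pos_le_divide_eq add_pos_nonneg)
    also have "\<dots> \<le> (1 + exp (s * m) * (1 + R'\<^sup>2)) / (1 + x\<^sup>2)"
      by (intro divide_right_mono) auto
    finally show ?thesis .
  next
    case False
    then have "x\<^sup>2 \<le> R'\<^sup>2" using power_mono[of "\<bar>x\<bar>" R' 2] by simp
    have "exp (s * h x) \<le> exp (s * m)"
      using hmax[of x] \<open>s > 0\<close> by simp
    also have "\<dots> \<le> exp (s * m) * (1 + R'\<^sup>2) / (1 + x\<^sup>2)"
      using \<open>x\<^sup>2 \<le> R'\<^sup>2\<close> by (simp add: pos_le_divide_eq add_pos_nonneg)
    also have "\<dots> \<le> (1 + exp (s * m) * (1 + R'\<^sup>2)) / (1 + x\<^sup>2)"
      by (intro divide_right_mono) auto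
    finally show ?thesis .
  qed
  then show ?thesis using that by blast
qed

lemma one_plus_square_mult_exp_le_of_nonpos:
  fixes y c :: real
  assumes "y \<le> 0" "c > 0"
  shows "(1 + y\<^sup>2) * exp (c * y) \<le> 1 + 2 / c\<^sup>2"
proof -
  have "0 \<le> - c * y" using assms by (simp add: mult_nonneg_nonpos)
  then have taylor: "1 + c\<^sup>2 * y\<^sup>2 / 2 \<le> exp (- c * y)"
    using exp_lower_Taylor_quadratic[of "- c * y"] by (simp add: power_mult_distrib)
  have "1 + y\<^sup>2 \<le> 1 + y\<^sup>2 + (2 / c\<^sup>2 + c\<^sup>2 * y\<^sup>2 / 2)" by simp
  also have "\<dots> = (1 + 2 / c\<^sup>2) * (1 + c\<^sup>2 * y\<^sup>2 / 2)" using assms by (simp add: field_simps)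
  also have "\<dots> \<le> (1 + 2 / c\<^sup>2) * exp (- c * y)" using taylor by (intro mult_left_mono) auto
  finally have "(1 + y\<^sup>2) * exp (c * y) \<le> (1 + 2 / c\<^sup>2) * exp (- c * y) * exp (c * y)"
    by (rule mult_right_mono) simp
  also have "\<dots> = 1 + 2 / c\<^sup>2" by (simp add: mult.assoc flip: exp_add)
  finally show ?thesis .
qed

lemma one_plus_square_mult_exp_le:
  fixes y m b c B :: real
  assumes "y \<le> m" "c > 0" "2 * c \<le> b" "b \<le> B"
  shows "(1 + y\<^sup>2) * exp (b * y) \<le> ((1 + m\<^sup>2) * exp (B * \<bar>m\<bar>) + 1 + 2 / c\<^sup>2) * exp (c * y)"
proof -
  have "(1 + y\<^sup>2) * exp ((b - c) * y) \<le> (1 + m\<^sup>2) * exp (B * \<bar>m\<bar>) + 1 + 2 / c\<^sup>2"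
  proof (cases "y \<ge> 0")
    case True
    have "1 + y\<^sup>2 \<le> 1 + m\<^sup>2" using True assms power_mono[of y m 2] by simp
    moreover have "(b - c) * y \<le> B * \<bar>m\<bar>" using True assms by (intro mult_mono) auto
    ultimately have "(1 + y\<^sup>2) * exp ((b - c) * y) \<le> (1 + m\<^sup>2) * exp (B * \<bar>m\<bar>)"
      by (intro mult_mono) auto
    moreover have "0 \<le> 1 + 2 / c\<^sup>2" by simp
    ultimately show ?thesis by linarith
  next
    case False
    have "(b - c) * y \<le> c * y" using False assms by (intro mult_right_mono_neg) auto
    then have "(1 + y\<^sup>2) * exp ((b - c) * y) \<le> (1 + y\<^sup>2) * exp (c * y)"
      by (intro mult_left_mono) auto
    also have "\<dots> \<le> 1 + 2 / c\<^sup>2"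
      using False assms by (intro one_plus_square_mult_exp_le_of_nonpos) auto
    moreover have "0 \<le> (1 + m\<^sup>2) * exp (B * \<bar>m\<bar>)" by simp
    ultimately show ?thesis by linarith
  qed
  then have "(1 + y\<^sup>2) * exp ((b - c) * y) * exp (c * y)
      \<le> ((1 + m\<^sup>2) * exp (B * \<bar>m\<bar>) + 1 + 2 / c\<^sup>2) * exp (c * y)"
    by (intro mult_right_mono) auto
  moreover have "exp (b * y) = exp ((b - c) * y) * exp (c * y)"
    by (simp add: algebra_simps flip: exp_add)
  ultimately show ?thesis by (simp only: mult.assoc)
qed

lemma tilted_moments_dominated:
  fixes h :: "real \<Rightarrow> real"
  assumes hmax: "\<And>x. h x \<le> m" and int: "\<And>s. s > 0 \<Longrightarrow> integrable lborel (\<lambda>x. exp (s * h x))"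
    and "\<beta> > 0"
  obtains g where "integrable lborel g"
    "\<And>b x. b \<in> {\<beta>/2<..<2*\<beta>} \<Longrightarrow> \<bar>h x * exp (b * h x)\<bar> \<le> g x"
    "\<And>b x. b \<in> {\<beta>/2<..<2*\<beta>} \<Longrightarrow> \<bar>h x * (h x * exp (b * h x))\<bar> \<le> g x"
proof (rule that)
  let ?K = "(1 + m\<^sup>2) * exp (2 * \<beta> * \<bar>m\<bar>) + 1 + 2 / (\<beta>/4)\<^sup>2"
  show "integrable lborel (\<lambda>x. ?K * exp (\<beta>/4 * h x))"
    using int[of "\<beta>/4"] \<open>\<beta> > 0\<close> by simp
  have dom: "(1 + (h x)\<^sup>2) * exp (b * h x) \<le> ?K * exp (\<beta>/4 * h x)" if "b \<in> {\<beta>/2<..<2*\<beta>}" for b x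
    using one_plus_square_mult_exp_le[OF hmax, of "\<beta>/4" b "2 * \<beta>"] that \<open>\<beta> > 0\<close> by simp
  have "\<bar>y\<bar> \<le> 1 + y\<^sup>2" for y :: real
  proof (cases "\<bar>y\<bar> \<le> 1")
    case True
    then show ?thesis using zero_le_power2[of y] by linarith
  next
    case False
    then have "\<bar>y\<bar> \<le> \<bar>y\<bar> * \<bar>y\<bar>" by (intro mult_le_cancel_left1[THEN iffD2]) auto
    then show ?thesis by (simp add: power2_eq_square abs_mult_self)
  qed
  then have "\<bar>h x * exp (b * h x)\<bar> \<le> (1 + (h x)\<^sup>2) * exp (b * h x)" for b x
    by (simp add: abs_mult mult_right_mono)
  then show "\<bar>h x * exp (b * h x)\<bar> \<le> ?K * exp (\<beta>/4 * h x)" if "b \<in> {\<beta>/2<..<2*\<beta>}" for b x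
    using dom[OF that] order_trans by blast
  have "\<bar>h x * (h x * exp (b * h x))\<bar> \<le> (1 + (h x)\<^sup>2) * exp (b * h x)" for b x
    by (simp add: abs_mult power2_eq_square[symmetric] mult.assoc[symmetric])
  then show "\<bar>h x * (h x * exp (b * h x))\<bar> \<le> ?K * exp (\<beta>/4 * h x)"
    if "b \<in> {\<beta>/2<..<2*\<beta>}" for b x
    using dom[OF that] order_trans by blast
qed

lemma tilted_moments_integrable:
  fixes h :: "real \<Rightarrow> real"
  assumes cont: "continuous_on UNIV h" and hmax: "\<And>x. h x \<le> m"
    and int: "\<And>s. s > 0 \<Longrightarrow> integrable lborel (\<lambda>x. exp (s * h x))" and "b > 0"
  shows "integrable lborel (\<lambda>x. h x * exp (b * h x))"
    and "integrable lborel (\<lambda>x. h x * (h x * exp (b * h x)))"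
proof -
  have [measurable]: "h \<in> borel_measurable borel"
    using cont by (rule borel_measurable_continuous_onI)
  obtain g where g: "integrable lborel g"
    "\<And>b' x. b' \<in> {b/2<..<2*b} \<Longrightarrow> \<bar>h x * exp (b' * h x)\<bar> \<le> g x"
    "\<And>b' x. b' \<in> {b/2<..<2*b} \<Longrightarrow> \<bar>h x * (h x * exp (b' * h x))\<bar> \<le> g x"
    using tilted_moments_dominated[OF hmax int \<open>b > 0\<close>] by blast
  have "b \<in> {b/2<..<2*b}" using \<open>b > 0\<close> by simp
  then have "\<bar>h x * exp (b * h x)\<bar> \<le> \<bar>g x\<bar>" "\<bar>h x * (h x * exp (b * h x))\<bar> \<le> \<bar>g x\<bar>" for x
    using g(2,3)[of b x] abs_ge_self[of "g x"] by linarith+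
  then show "integrable lborel (\<lambda>x. h x * exp (b * h x))"
    "integrable lborel (\<lambda>x. h x * (h x * exp (b * h x)))"
    using g(1) by (auto intro!: Bochner_Integration.integrable_bound[of _ g] AE_I2)
qed

lemma tilted_integrals_has_real_derivative:
  fixes h :: "real \<Rightarrow> real"
  assumes cont: "continuous_on UNIV h" and hmax: "\<And>x. h x \<le> m"
    and int: "\<And>s. s > 0 \<Longrightarrow> integrable lborel (\<lambda>x. exp (s * h x))" and "\<beta> > 0"
  shows "((\<lambda>b. \<integral>x. exp (b * h x) \<partial>lborel) has_real_derivative
      (\<integral>x. h x * exp (\<beta> * h x) \<partial>lborel)) (at \<beta>)"
    and "((\<lambda>b. \<integral>x. h x * exp (b * h x) \<partial>lborel) has_real_derivative
      (\<integral>x. h x * (h x * exp (\<beta> * h x)) \<partial>lborel)) (at \<beta>)"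
proof -
  have [measurable]: "h \<in> borel_measurable borel"
    using cont by (rule borel_measurable_continuous_onI)
  obtain g where g: "integrable lborel g"
    "\<And>b x. b \<in> {\<beta>/2<..<2*\<beta>} \<Longrightarrow> \<bar>h x * exp (b * h x)\<bar> \<le> g x"
    "\<And>b x. b \<in> {\<beta>/2<..<2*\<beta>} \<Longrightarrow> \<bar>h x * (h x * exp (b * h x))\<bar> \<le> g x"
    using tilted_moments_dominated[OF hmax int \<open>\<beta> > 0\<close>] by blast
  have \<beta>: "\<beta> \<in> {\<beta>/2<..<2*\<beta>}" using \<open>\<beta> > 0\<close> by simp
  show "((\<lambda>b. \<integral>x. exp (b * h x) \<partial>lborel) has_real_derivative
      (\<integral>x. h x * exp (\<beta> * h x) \<partial>lborel)) (at \<beta>)"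
    by (rule has_real_derivative_integral_dominated[OF \<beta> _ _ g(1)])
      (use int g(2) in \<open>auto intro!: derivative_eq_intros\<close>)
  show "((\<lambda>b. \<integral>x. h x * exp (b * h x) \<partial>lborel) has_real_derivative
      (\<integral>x. h x * (h x * exp (\<beta> * h x)) \<partial>lborel)) (at \<beta>)"
    by (rule has_real_derivative_integral_dominated[OF \<beta> _ _ g(1)])
      (use tilted_moments_integrable[OF cont hmax int] g(3) in \<open>auto intro!: derivative_eq_intros\<close>)
qed

lemma tilted_mean_has_real_derivative:
  fixes h :: "real \<Rightarrow> real"
  assumes cont: "continuous_on UNIV h" and hmax: "\<And>x. h x \<le> m"
    and int: "\<And>s. s > 0 \<Longrightarrow> integrable lborel (\<lambda>x. exp (s * h x))" and "\<beta> > 0"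
  defines "Z \<equiv> \<lambda>b. \<integral>x. exp (b * h x) \<partial>lborel"
    and "Z1 \<equiv> \<lambda>b. \<integral>x. h x * exp (b * h x) \<partial>lborel"
  shows "((\<lambda>b. Z1 b / Z b) has_real_derivative
      (\<integral>x. (h x - Z1 \<beta> / Z \<beta>)\<^sup>2 * exp (\<beta> * h x) \<partial>lborel) / Z \<beta>) (at \<beta>)"
proof -
  define Z2 where "Z2 = (\<integral>x. h x * (h x * exp (\<beta> * h x)) \<partial>lborel)"
  note derivs = tilted_integrals_has_real_derivative[OF cont hmax int \<open>\<beta> > 0\<close>]
  have "Z \<beta> > 0"
    unfolding Z_def using int \<open>\<beta> > 0\<close> by (intro integral_lborel_pos) auto
  then have quotient: "((\<lambda>b. Z1 b / Z b) has_real_derivative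
      (Z2 * Z \<beta> - Z1 \<beta> * Z1 \<beta>) / (Z \<beta> * Z \<beta>)) (at \<beta>)"
    using DERIV_divide[OF derivs(2) derivs(1)] by (simp add: Z_def Z1_def Z2_def)
  define E where "E = Z1 \<beta> / Z \<beta>"
  have "(\<integral>x. (h x - E)\<^sup>2 * exp (\<beta> * h x) \<partial>lborel)
      = (\<integral>x. h x * (h x * exp (\<beta> * h x)) - 2 * E * (h x * exp (\<beta> * h x))
            + E\<^sup>2 * exp (\<beta> * h x) \<partial>lborel)"
    by (rule Bochner_Integration.integral_cong) (auto simp: power2_eq_square algebra_simps)
  also have "\<dots> = Z2 - 2 * E * Z1 \<beta> + E\<^sup>2 * Z \<beta>"
    using tilted_moments_integrable[OF cont hmax int \<open>\<beta> > 0\<close>] int[OF \<open>\<beta> > 0\<close>]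
    by (simp add: Z2_def Z1_def Z_def)
  also have "\<dots> = (Z2 * Z \<beta> - Z1 \<beta> * Z1 \<beta>) / (Z \<beta> * Z \<beta>) * Z \<beta>"
    using \<open>Z \<beta> > 0\<close> by (simp add: E_def field_simps power2_eq_square)
  finally show ?thesis
    using quotient \<open>Z \<beta> > 0\<close> by (simp add: E_def)
qed

lemma integral_Icc_centered_deriv_exp_by_parts:
  fixes h dh :: "real \<Rightarrow> real"
  assumes hder: "\<And>x. (h has_real_derivative dh x) (at x)" and cont: "continuous_on UNIV dh"
    and "a \<le> b"
  shows "\<beta> * (\<integral>x. (x - \<mu>) * dh x * exp (\<beta> * h x) * indicator {a..b} x \<partial>lborel)
    = (b - \<mu>) * exp (\<beta> * h b) - (a - \<mu>) * exp (\<beta> * h a)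
      - (\<integral>x. exp (\<beta> * h x) * indicator {a..b} x \<partial>lborel)"
proof -
  have "isCont h x" for x using hder by (rule DERIV_isCont)
  moreover have "isCont dh x" for x using cont by (simp add: continuous_on_eq_continuous_at)
  ultimately have cont_exp: "isCont (\<lambda>x. exp (\<beta> * h x)) x"
    and cont_deriv: "isCont (\<lambda>x. (x - \<mu>) * dh x * exp (\<beta> * h x)) x" for x
    by (auto intro!: continuous_intros)
  have "(\<integral>x. (exp (\<beta> * h x) + \<beta> * ((x - \<mu>) * dh x * exp (\<beta> * h x))) * indicator {a..b} x \<partial>lborel)
      = (b - \<mu>) * exp (\<beta> * h b) - (a - \<mu>) * exp (\<beta> * h a)"
  proof (rule integral_FTC_Icc_real[OF \<open>a \<le> b\<close>])
    show "((\<lambda>x. (x - \<mu>) * exp (\<beta> * h x)) has_real_derivative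
        exp (\<beta> * h x) + \<beta> * ((x - \<mu>) * dh x * exp (\<beta> * h x))) (at x)" for x
      by (rule derivative_eq_intros refl hder | simp add: algebra_simps)+
  qed (use cont_exp cont_deriv in \<open>auto intro!: continuous_intros\<close>)
  moreover have "integrable lborel (\<lambda>x. exp (\<beta> * h x) * indicator {a..b} x)"
    "integrable lborel (\<lambda>x. (x - \<mu>) * dh x * exp (\<beta> * h x) * indicator {a..b} x)"
    using cont_exp cont_deriv by (auto intro: borel_integrable_atLeastAtMost)
  ultimately show ?thesis
    by (simp add: distrib_right mult.assoc)
qed

lemma integral_centered_deriv_exp:
  fixes h dh :: "real \<Rightarrow> real"
  assumes hder: "\<And>x. (h has_real_derivative dh x) (at x)" and cont: "continuous_on UNIV dh"
    and sign: "\<And>x. (x - \<mu>) * dh x \<le> 0" and "\<beta> > 0"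
    and decay: "\<And>x. exp (\<beta> * h x) \<le> C / (1 + x\<^sup>2)"
  shows "(\<integral>x. (x - \<mu>) * dh x * exp (\<beta> * h x) \<partial>lborel) = - (\<integral>x. exp (\<beta> * h x) \<partial>lborel) / \<beta>"
proof -
  define \<phi> where "\<phi> x = exp (\<beta> * h x)" for x
  define \<psi> where "\<psi> x = (x - \<mu>) * dh x * \<phi> x" for x
  have "continuous_on UNIV h"
    using hder by (intro continuous_at_imp_continuous_on) (auto intro: DERIV_isCont)
  then have "continuous_on UNIV \<phi>" "continuous_on UNIV \<psi>"
    unfolding \<phi>_def \<psi>_def by (auto intro!: continuous_intros cont)
  then have [measurable]: "\<phi> \<in> borel_measurable borel" "\<psi> \<in> borel_measurable borel"
    by (auto intro: borel_measurable_continuous_onI)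
  have int_\<phi>: "integrable lborel \<phi>"
    using decay by (intro integrable_if_le_inverse_one_plus_square) (auto simp: \<phi>_def)
  let ?P = "\<lambda>x. (x - \<mu>) * \<phi> x"
  have parts: "(\<integral>x. - \<psi> x * indicator {- real n..real n} x \<partial>lborel)
      = ((\<integral>x. \<phi> x * indicator {- real n..real n} x \<partial>lborel) - (?P (real n) - ?P (- real n))) / \<beta>" for n
  proof -
    have "\<beta> * (\<integral>x. \<psi> x * indicator {- real n..real n} x \<partial>lborel)
        = ?P (real n) - ?P (- real n) - (\<integral>x. \<phi> x * indicator {- real n..real n} x \<partial>lborel)"
      using integral_Icc_centered_deriv_exp_by_parts[OF hder cont, of "- real n" "real n" \<beta> \<mu>]
      unfolding \<psi>_def \<phi>_def by simp
    moreover have "(\<integral>x. - \<psi> x * indicator {- real n..real n} x \<partial>lborel)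
        = - (\<integral>x. \<psi> x * indicator {- real n..real n} x \<partial>lborel)"
      by (simp only: mult_minus_left integral_minus)
    ultimately show ?thesis using \<open>\<beta> > 0\<close> by (simp add: field_simps)
  qed
  have "\<bar>\<phi> x\<bar> \<le> C / (1 + x\<^sup>2)" for x using decay by (simp add: \<phi>_def)
  note boundary = tendsto_linear_mult_pm_real_nat[OF this, of \<mu>]
  have "(\<lambda>n. ((\<integral>x. \<phi> x * indicator {- real n..real n} x \<partial>lborel) - (?P (real n) - ?P (- real n))) / \<beta>)
      \<longlonglongrightarrow> (integral\<^sup>L lborel \<phi> - (0 - 0)) / \<beta>"
    using tendsto_integral_mult_indicator_Icc_nat[OF int_\<phi>] boundary \<open>\<beta> > 0\<close>
    by (intro tendsto_divide tendsto_diff tendsto_const) auto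
  then have lim: "(\<lambda>n. \<integral>x. - \<psi> x * indicator {- real n..real n} x \<partial>lborel) \<longlonglongrightarrow> integral\<^sup>L lborel \<phi> / \<beta>"
    unfolding parts by simp
  have "integral\<^sup>L lborel (\<lambda>x. - \<psi> x) = integral\<^sup>L lborel \<phi> / \<beta>"
  proof (rule integral_monotone_convergence[OF _ _ _ lim])
    show "integrable lborel (\<lambda>x. - \<psi> x * indicator {- real n..real n} x)" for n
      using \<open>continuous_on UNIV \<psi>\<close>
      by (intro borel_integrable_atLeastAtMost) (auto intro!: continuous_intros simp: continuous_on_eq_continuous_at)
    show "AE x in lborel. mono (\<lambda>n. - \<psi> x * indicator {- real n..real n} x)"
      using sign by (intro AE_I2 monoI) (auto simp: \<psi>_def \<phi>_def mult_nonpos_nonneg split: split_indicator)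
    show "AE x in lborel. (\<lambda>n. - \<psi> x * indicator {- real n..real n} x) \<longlonglongrightarrow> - \<psi> x"
      by (intro AE_I2 tendsto_mult_indicator_Icc_nat)
  qed measurable
  then show ?thesis unfolding \<psi>_def \<phi>_def[abs_def] by simp
qed

lemma C4_imp_continuously_differentiable:
  assumes "C4 f"
  shows "\<And>x. (f has_real_derivative deriv f x) (at x)" and "continuous_on UNIV (deriv f)"
proof -
  have der: "((deriv ^^ k) f has_real_derivative (deriv ^^ Suc k) f x) (at x)" if "k < 4" for k x
    using assms that unfolding C4_def by blast
  show "(f has_real_derivative deriv f x) (at x)" for x
    using der[of 0 x] by simp
  show "continuous_on UNIV (deriv f)"
    using der[of "Suc 0"] by (auto intro!: continuous_at_imp_continuous_on DERIV_isCont)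
qed

lemma powr_eq_exp_logf: "f x > 0 \<Longrightarrow> f x powr b = exp (b * logf f x)"
  by (simp add: powr_def logf_def mult.commute)

lemma logf_has_real_derivative:
  assumes "f x > 0" "(f has_real_derivative D) (at x)"
  shows "(logf f has_real_derivative D / f x) (at x)"
  unfolding logf_def[abs_def] using assms by (auto intro!: derivative_eq_intros)

lemma integrable_powr_if_le_inverse_one_plus_square:
  fixes f :: "real \<Rightarrow> real"
  assumes "continuous_on UNIV f" "\<And>x. f x powr s \<le> C / (1 + x\<^sup>2)"
  shows "integrable lborel (\<lambda>x. f x powr s)"
proof (rule integrable_if_le_inverse_one_plus_square)
  have [measurable]: "f \<in> borel_measurable borel"
    using assms(1) by (rule borel_measurable_continuous_onI)
  show "(\<lambda>x. f x powr s) \<in> borel_measurable lborel" by measurable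
qed (use assms(2) in simp)

lemma unimodal_le_mode:
  fixes f :: "real \<Rightarrow> real"
  assumes "mono_on {..\<mu>} f" "antimono_on {\<mu>..} f"
  shows "f x \<le> f \<mu>"
proof (cases "x \<le> \<mu>")
  case True
  then show ?thesis using mono_onD[OF assms(1), of x \<mu>] by simp
next
  case False
  then show ?thesis using monotone_onD[OF assms(2), of \<mu> x] by simp
qed

lemma unimodal_deriv_sign:
  fixes f :: "real \<Rightarrow> real"
  assumes mono: "mono_on {..\<mu>} f" and antimono: "antimono_on {\<mu>..} f"
    and der: "(f has_real_derivative D) (at x)"
  shows "(x - \<mu>) * D \<le> 0"
proof (cases "x \<le> \<mu>")
  case True
  have "\<not> D < 0"
  proof
    assume "D < 0"
    then obtain d where "d > 0" and d: "\<And>h. h > 0 \<Longrightarrow> h < d \<Longrightarrow> f x < f (x - h)"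
      using DERIV_neg_dec_left[OF der] by blast
    then have "f x < f (x - d / 2)" by simp
    moreover have "f (x - d / 2) \<le> f x"
      using mono_onD[OF mono, of "x - d / 2" x] True \<open>d > 0\<close> by simp
    ultimately show False by simp
  qed
  then show ?thesis using True by (simp add: mult_nonpos_nonneg)
next
  case False
  have "\<not> D > 0"
  proof
    assume "D > 0"
    then obtain d where "d > 0" and d: "\<And>h. h > 0 \<Longrightarrow> h < d \<Longrightarrow> f x < f (x + h)"
      using DERIV_pos_inc_right[OF der] by blast
    then have "f x < f (x + d / 2)" by simp
    moreover have "f (x + d / 2) \<le> f x"
      using monotone_onD[OF antimono, of x "x + d / 2"] False \<open>d > 0\<close> by simp
    ultimately show False by simp
  qed
  then show ?thesis using False by (simp add: mult_nonneg_nonpos)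
qed

lemma antimono_regvar_powr_tail:
  fixes f :: "real \<Rightarrow> real"
  assumes pos: "\<And>x. f x > 0" and antimono: "antimono_on {c..} f"
    and lim: "((\<lambda>t. - ln (f (2 * t)) / - ln (f t)) \<longlongrightarrow> L) at_top" and "L > 1"
  obtains a \<gamma> T where "a > 0" "\<gamma> > 0" "\<And>t. t \<ge> T \<Longrightarrow> a * t powr \<gamma> \<le> - ln (f t)"
proof -
  have "mono_on {c..} (\<lambda>t. - ln (f t))"
  proof (rule mono_onI)
    fix s t assume "s \<in> {c..}" "t \<in> {c..}" "s \<le> t"
    then show "- ln (f s) \<le> - ln (f t)" using monotone_onD[OF antimono, of s t] pos by simp
  qed
  then show ?thesis
    using powr_lower_bound_if_doubling_ratio_tendsto[OF _ lim \<open>L > 1\<close>] that by blast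
qed

lemma unimodal_regvar_powr_tail:
  fixes f :: "real \<Rightarrow> real"
  assumes pos: "\<And>x. f x > 0" and mono: "mono_on {..\<mu>} f" and antimono: "antimono_on {\<mu>..} f"
    and regvar: "\<exists>\<alpha>>0. \<forall>x>0. ((\<lambda>t. (- ln (f (t * x))) / (- ln (f t))) \<longlongrightarrow> x powr \<alpha>) at_infinity"
  obtains a \<gamma> T where "a > 0" "\<gamma> > 0" "\<And>x. T \<le> \<bar>x\<bar> \<Longrightarrow> a * \<bar>x\<bar> powr \<gamma> \<le> - ln (f x)"
proof -
  obtain \<alpha> where "\<alpha> > 0" and rv: "((\<lambda>t. - ln (f (t * 2)) / - ln (f t)) \<longlongrightarrow> 2 powr \<alpha>) at_infinity"
    using regvar by force
  have L: "2 powr \<alpha> > (1::real)" using \<open>\<alpha> > 0\<close> by simp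
  have "((\<lambda>t. - ln (f (2 * t)) / - ln (f t)) \<longlongrightarrow> 2 powr \<alpha>) at_top"
    using tendsto_mono[OF at_top_le_at_infinity rv] by (simp add: mult.commute)
  then obtain a1 \<gamma>1 T1 where
    right: "a1 > 0" "\<gamma>1 > 0" "\<And>t. t \<ge> T1 \<Longrightarrow> a1 * t powr \<gamma>1 \<le> - ln (f t)"
    using antimono_regvar_powr_tail[OF pos antimono _ L] by blast
  have "filterlim uminus at_infinity (at_top :: real filter)"
    using filterlim_uminus_at_bot_at_top at_bot_le_at_infinity by (rule filterlim_mono) simp
  from filterlim_compose[OF rv this]
  have "((\<lambda>t. - ln (f (- (2 * t))) / - ln (f (- t))) \<longlongrightarrow> 2 powr \<alpha>) at_top"
    by (simp add: mult.commute)
  moreover have "antimono_on {- \<mu>..} (\<lambda>t. f (- t))"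
  proof (rule monotone_onI)
    fix s t assume "s \<in> {- \<mu>..}" "t \<in> {- \<mu>..}" "s \<le> t"
    then show "f (- s) \<ge> f (- t)" using mono_onD[OF mono, of "- t" "- s"] by simp
  qed
  ultimately obtain a2 \<gamma>2 T2 where
    left: "a2 > 0" "\<gamma>2 > 0" "\<And>t. t \<ge> T2 \<Longrightarrow> a2 * t powr \<gamma>2 \<le> - ln (f (- t))"
    using antimono_regvar_powr_tail[of "\<lambda>t. f (- t)", OF pos _ _ L] by blast
  show ?thesis
  proof (rule that)
    fix x assume x: "max 1 (max T1 T2) \<le> \<bar>x\<bar>"
    have "\<bar>x\<bar> powr min \<gamma>1 \<gamma>2 \<le> \<bar>x\<bar> powr \<gamma>1" "\<bar>x\<bar> powr min \<gamma>1 \<gamma>2 \<le> \<bar>x\<bar> powr \<gamma>2"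
      using x by (simp_all add: powr_mono)
    then have le1: "min a1 a2 * \<bar>x\<bar> powr min \<gamma>1 \<gamma>2 \<le> a1 * \<bar>x\<bar> powr \<gamma>1"
      and le2: "min a1 a2 * \<bar>x\<bar> powr min \<gamma>1 \<gamma>2 \<le> a2 * \<bar>x\<bar> powr \<gamma>2"
      using right(1) left(1) by (simp_all add: mult_mono)
    show "min a1 a2 * \<bar>x\<bar> powr min \<gamma>1 \<gamma>2 \<le> - ln (f x)"
    proof (cases "x \<ge> 0")
      case True
      then show ?thesis using le1 right(3)[of x] x by simp
    next
      case False
      then show ?thesis using le2 left(3)[of "- x"] x by simp
    qed
  qed (use right(1,2) left(1,2) in auto)
qed

lemma unimodal_regvar_powr_decay:
  fixes f :: "real \<Rightarrow> real"
  assumes pos: "\<And>x. f x > 0" and mono: "mono_on {..\<mu>} f" and antimono: "antimono_on {\<mu>..} f"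
    and regvar: "\<exists>\<alpha>>0. \<forall>x>0. ((\<lambda>t. (- ln (f (t * x))) / (- ln (f t))) \<longlongrightarrow> x powr \<alpha>) at_infinity"
    and "s > 0"
  obtains C where "\<And>x. f x powr s \<le> C / (1 + x\<^sup>2)"
proof -
  obtain a \<gamma> T where "a > 0" "\<gamma> > 0" and tail: "\<And>x. T \<le> \<bar>x\<bar> \<Longrightarrow> a * \<bar>x\<bar> powr \<gamma> \<le> - logf f x"
    using unimodal_regvar_powr_tail[OF pos mono antimono regvar] unfolding logf_def by blast
  have "logf f x \<le> logf f \<mu>" for x
    using unimodal_le_mode[OF mono antimono] pos by (simp add: logf_def)
  then obtain C where "\<And>x. exp (s * logf f x) \<le> C / (1 + x\<^sup>2)"
    using exp_le_inverse_one_plus_square_if_powr_tail[OF _ \<open>a > 0\<close> \<open>\<gamma> > 0\<close> \<open>s > 0\<close> tail] by blast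
  then show ?thesis by (intro that[of C]) (simp add: powr_eq_exp_logf pos)
qed

lemma Mfun_has_real_derivative:
  fixes f :: "real \<Rightarrow> real"
  assumes pos: "\<And>x. f x > 0" and cont: "continuous_on UNIV f" and fmax: "\<And>x. f x \<le> f \<mu>"
    and int: "\<And>s. s > 0 \<Longrightarrow> integrable lborel (\<lambda>x. f x powr s)" and "\<beta> > 0"
  shows "(Mfun f has_real_derivative Varb f \<beta> (logf f)) (at \<beta>)"
proof -
  let ?Z = "\<lambda>b. \<integral>x. exp (b * logf f x) \<partial>lborel"
  let ?Z1 = "\<lambda>b. \<integral>x. logf f x * exp (b * logf f x) \<partial>lborel"
  have "continuous_on UNIV (logf f)"
    unfolding logf_def[abs_def] using cont pos by (auto intro!: continuous_intros simp: less_imp_neq[symmetric])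
  moreover have "logf f x \<le> logf f \<mu>" for x
    using fmax pos by (simp add: logf_def)
  moreover have "integrable lborel (\<lambda>x. exp (s * logf f x))" if "s > 0" for s
    using int[OF that] pos by (simp add: powr_eq_exp_logf)
  ultimately have "((\<lambda>b. ?Z1 b / ?Z b) has_real_derivative
      (\<integral>x. (logf f x - ?Z1 \<beta> / ?Z \<beta>)\<^sup>2 * exp (\<beta> * logf f x) \<partial>lborel) / ?Z \<beta>) (at \<beta>)"
    by (rule tilted_mean_has_real_derivative[OF _ _ _ \<open>\<beta> > 0\<close>])
  moreover have "Mfun f = (\<lambda>b. ?Z1 b / ?Z b)"
    by (simp add: fun_eq_iff Mfun_def Eb_def Zb_def powr_eq_exp_logf pos)
  moreover have "Varb f \<beta> (logf f)
      = (\<integral>x. (logf f x - ?Z1 \<beta> / ?Z \<beta>)\<^sup>2 * exp (\<beta> * logf f x) \<partial>lborel) / ?Z \<beta>"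
    by (simp add: Varb_def Eb_def Zb_def powr_eq_exp_logf pos)
  ultimately show ?thesis by simp
qed

lemma Sfun_eq:
  fixes f :: "real \<Rightarrow> real"
  assumes pos: "\<And>x. f x > 0" and fder: "\<And>x. (f has_real_derivative deriv f x) (at x)"
    and cont': "continuous_on UNIV (deriv f)"
    and mono: "mono_on {..\<mu>} f" and antimono: "antimono_on {\<mu>..} f"
    and decay: "\<And>x. f x powr \<beta> \<le> C / (1 + x\<^sup>2)" and "\<beta> > 0"
  shows "Sfun f \<mu> \<beta> = - 1 / \<beta>"
proof -
  have hder: "(logf f has_real_derivative deriv f x / f x) (at x)" for x
    using pos fder by (rule logf_has_real_derivative)
  have cont: "continuous_on UNIV f"
    using fder by (intro continuous_at_imp_continuous_on) (auto intro: DERIV_isCont)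
  then have "continuous_on UNIV (\<lambda>x. deriv f x / f x)"
    using cont' pos by (auto intro!: continuous_intros simp: less_imp_neq[symmetric])
  moreover have "(x - \<mu>) * (deriv f x / f x) \<le> 0" for x
  proof -
    have "(x - \<mu>) * (deriv f x / f x) = (x - \<mu>) * deriv f x / f x" by simp
    also have "\<dots> \<le> 0"
      using unimodal_deriv_sign[OF mono antimono fder, of x] pos[of x] by (rule divide_nonpos_pos)
    finally show ?thesis .
  qed
  moreover have "exp (\<beta> * logf f x) \<le> C / (1 + x\<^sup>2)" for x
    using decay pos by (simp add: powr_eq_exp_logf)
  ultimately have parts: "(\<integral>x. (x - \<mu>) * (deriv f x / f x) * exp (\<beta> * logf f x) \<partial>lborel)
      = - (\<integral>x. exp (\<beta> * logf f x) \<partial>lborel) / \<beta>"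
    using integral_centered_deriv_exp[OF hder] \<open>\<beta> > 0\<close> by blast
  have "(\<integral>x. f x powr \<beta> \<partial>lborel) > 0"
    using integrable_powr_if_le_inverse_one_plus_square[OF cont decay]
    by (rule integral_lborel_pos) (simp add: pos less_imp_neq[symmetric])
  then show ?thesis
    using parts \<open>\<beta> > 0\<close> pos DERIV_imp_deriv[OF hder]
    by (simp add: Sfun_def Eb_def Zb_def kfun_def powr_eq_exp_logf field_simps)
qed

theorem proposition3:
  fixes f :: "real \<Rightarrow> real" and \<mu> M \<beta> :: real
  assumes pos: "\<forall>x. f x > 0"
    and smooth: "C4 f"
    and unimodal: "mono_on {..\<mu>} f" "antimono_on {\<mu>..} f"
    and regvar: "\<exists>\<alpha>>0. \<forall>x>0.
        ((\<lambda>t. (- ln (f (t * x))) / (- ln (f t))) \<longlongrightarrow> x powr \<alpha>) at_infinity"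
    and M_pos: "M > 0"
    and bound: "\<forall>x. \<bar>(deriv ^^ 4) (logf f) x\<bar> < M"
    and beta: "\<beta> > 0"
  shows "(Mfun f has_real_derivative Varb f \<beta> (logf f)) (at \<beta>)
       \<and> Sfun f \<mu> \<beta> = - 1 / \<beta>
       \<and> (Sfun f \<mu> has_real_derivative 1 / \<beta>\<^sup>2) (at \<beta>)"
proof -
  have pos: "\<And>x. f x > 0" using pos by blast
  note fder = C4_imp_continuously_differentiable(1)[OF smooth]
  have cont: "continuous_on UNIV f"
    using fder by (intro continuous_at_imp_continuous_on) (auto intro: DERIV_isCont)
  have decay: "\<exists>C. \<forall>x. f x powr s \<le> C / (1 + x\<^sup>2)" if "s > 0" for s
    using unimodal_regvar_powr_decay[OF pos unimodal regvar that] by blast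
  have S: "Sfun f \<mu> b = - 1 / b" if "b > 0" for b
    using decay[OF that] Sfun_eq[OF pos fder C4_imp_continuously_differentiable(2)[OF smooth] unimodal _ that]
    by blast
  have "(Sfun f \<mu> has_real_derivative 1 / \<beta>\<^sup>2) (at \<beta>)"
  proof (rule has_field_derivative_transform_within_open[where f = "\<lambda>b. - 1 / b" and S = "{0<..}"])
    show "((\<lambda>b. - 1 / b) has_real_derivative 1 / \<beta>\<^sup>2) (at \<beta>)"
      using beta by (auto intro!: derivative_eq_intros simp: power2_eq_square)
  qed (use beta S in auto)
  moreover have "(Mfun f has_real_derivative Varb f \<beta> (logf f)) (at \<beta>)"
    using decay integrable_powr_if_le_inverse_one_plus_square[OF cont]
    by (intro Mfun_has_real_derivative[OF pos cont unimodal_le_mode[OF unimodal] _ beta]) blast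
  ultimately show ?thesis using S beta by blast
qed

end
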